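(* Let $n\ge3$. Then the map $\gamma\colon\mathbb{R}\to\mathcal{C}^1$ is injective (i.e. $\gamma$ is an embedded bi-infinite path).
   Context: Let $\mathbf{k}$ be a field of characteristic zero; $\mathrm{Tame}(\mathbf{k}^3)=\langle \mathrm{GL}_3(\mathbf{k})\ltimes\mathbf{k}^3,\ \{(x_1+P(x_2,x_3),x_2,x_3)\}\rangle$. For $r\in\{1,2,3\}$ a vertex of type $r$ is an orbit $[f_1,\dots,f_r]$, under post-composition by $\mathrm{GL}_r(\mathbf{k})\ltimes\mathbf{k}^r$, of the first $r$ components of an element $(f_1,f_2,f_3)\in\mathrm{Tame}(\mathbf{k}^3)$. $\mathcal{C}$ is the 2-dimensional simplicial complex on these vertices with triangles $[f_1],[f_1,f_2],[f_1,f_2,f_3]$ for $(f_1,f_2,f_3)\in\mathrm{Tame}(\mathbf{k}^3)$, with 1-skeleton $\mathcal{C}^1$; $\mathrm{Tame}(\mathbf{k}^3)$ acts by $g\cdot[f_1,\dots,f_r]=[f_1\circ g^{-1},\dots,f_r\circ g^{-1}]$. Let $g^{-1}=(x_2,x_1+x_2x_3,x_3)$, $h^{-1}=(x_3,x_1,x_2)$, $f=g^n\circ h$. Define $\gamma\colon\mathbb{R}\to\mathcal{C}^1$ by $\gamma(0)=[x_1]$, $\gamma(1)=[x_1,x_3]$, $\gamma(2)=[x_3]$, $\gamma[0,2]$ the length 2 path through them (parametrised by arc length), and $\gamma[2k,2k+2]=f^k\cdot\gamma[0,2]$ for $k\in\mathbb{Z}$. *)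

theory Defs
  imports Complex_Main
begin

text \<open>Points of k^3 are triples. Since char k = 0, k is infinite, so polynomial maps
are faithfully represented by the functions they induce.\<close>

type_synonym 'k pt = "'k \<times> 'k \<times> 'k"

definition coord :: "nat \<Rightarrow> 'k pt \<Rightarrow> 'k" where
  "coord i p = (case p of (a, b, c) \<Rightarrow> (if i = 0 then a else if i = 1 then b else c))"

inductive_set poly2 :: "('k::field_char_0 \<Rightarrow> 'k \<Rightarrow> 'k) set" where
  const: "(\<lambda>x y. c) \<in> poly2"
| var1: "(\<lambda>x y. x) \<in> poly2"
| var2: "(\<lambda>x y. y) \<in> poly2"
| add: "P \<in> poly2 \<Longrightarrow> Q \<in> poly2 \<Longrightarrow> (\<lambda>x y. P x y + Q x y) \<in> poly2"
| mult: "P \<in> poly2 \<Longrightarrow> Q \<in> poly2 \<Longrightarrow> (\<lambda>x y. P x y * Q x y) \<in> poly2"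

definition invertible_mat :: "nat \<Rightarrow> (nat \<Rightarrow> nat \<Rightarrow> 'k::field) \<Rightarrow> bool" where
  "invertible_mat r A \<longleftrightarrow> (\<exists>B. \<forall>i<r. \<forall>j<r.
      (\<Sum>l<r. A i l * B l j) = (if i = j then 1 else 0) \<and>
      (\<Sum>l<r. B i l * A l j) = (if i = j then 1 else 0))"

definition affine3 :: "('k::field_char_0 pt \<Rightarrow> 'k pt) set" where
  "affine3 = {F. \<exists>A c. invertible_mat 3 A \<and>
      (\<forall>p i. i < 3 \<longrightarrow> coord i (F p) = (\<Sum>j<3. A i j * coord j p) + c i)}"

definition elementary3 :: "('k::field_char_0 pt \<Rightarrow> 'k pt) set" where
  "elementary3 = {F. \<exists>P \<in> poly2. F = (\<lambda>(x1, x2, x3). (x1 + P x2 x3, x2, x3))}"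

inductive_set Tame :: "('k::field_char_0 pt \<Rightarrow> 'k pt) set" where
  aff: "F \<in> affine3 \<Longrightarrow> F \<in> Tame"
| elem: "F \<in> elementary3 \<Longrightarrow> F \<in> Tame"
| comp: "F \<in> Tame \<Longrightarrow> G \<in> Tame \<Longrightarrow> F \<circ> G \<in> Tame"
| inverse: "F \<in> Tame \<Longrightarrow> inv F \<in> Tame"

text \<open>Orbit [f_1,...,f_r] of an r-tuple of functions under post-composition by
GL_r(k) \<ltimes> k^r.  Vertices are represented by these orbits (sets of lists).\<close>
type_synonym 'k vertex = "('k pt \<Rightarrow> 'k) list set"

definition orbit :: "('k::field_char_0 pt \<Rightarrow> 'k) list \<Rightarrow> 'k vertex" where
  "orbit fs = {map (\<lambda>i x. (\<Sum>j<length fs. A i j * (fs ! j) x) + c i) [0..<length fs]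
                 | A c. invertible_mat (length fs) A}"

definition vertices :: "'k::field_char_0 vertex set" where
  "vertices = {orbit (map (\<lambda>i. coord i \<circ> F) [0..<r]) | F r. F \<in> Tame \<and> 1 \<le> r \<and> r \<le> 3}"

definition g_inv :: "'k::field_char_0 pt \<Rightarrow> 'k pt" where
  "g_inv = (\<lambda>(x1, x2, x3). (x2, x1 + x2 * x3, x3))"
definition g_map :: "'k::field_char_0 pt \<Rightarrow> 'k pt" where
  "g_map = (\<lambda>(x1, x2, x3). (x2 - x1 * x3, x1, x3))"
definition h_inv :: "'k::field_char_0 pt \<Rightarrow> 'k pt" where
  "h_inv = (\<lambda>(x1, x2, x3). (x3, x1, x2))"
definition h_map :: "'k::field_char_0 pt \<Rightarrow> 'k pt" where
  "h_map = (\<lambda>(x1, x2, x3). (x2, x3, x1))"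

definition f_map :: "nat \<Rightarrow> 'k::field_char_0 pt \<Rightarrow> 'k pt" where
  "f_map n = (g_map ^^ n) \<circ> h_map"
definition f_inv :: "nat \<Rightarrow> 'k::field_char_0 pt \<Rightarrow> 'k pt" where
  "f_inv n = h_inv \<circ> (g_inv ^^ n)"

definition f_pow :: "nat \<Rightarrow> int \<Rightarrow> 'k::field_char_0 pt \<Rightarrow> 'k pt" where
  "f_pow n k = (if 0 \<le> k then f_map n ^^ nat k else f_inv n ^^ nat (- k))"

text \<open>Action of a (bijective) map \<phi> on vertices, given by \<phi>^{-1}:
  \<phi> \<cdot> [f_1,...,f_r] = [f_1 \<circ> \<phi>^{-1}, ..., f_r \<circ> \<phi>^{-1}].\<close>
definition act_by_inv :: "('k pt \<Rightarrow> 'k pt) \<Rightarrow> ('k::field_char_0 pt \<Rightarrow> 'k) list \<Rightarrow> 'k vertex" where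
  "act_by_inv \<phi>inv fs = orbit (map (\<lambda>fi. fi \<circ> \<phi>inv) fs)"

text \<open>Integer vertices of \<gamma>: \<gamma>(2k) = f^k\<cdot>[x1], \<gamma>(2k+1) = f^k\<cdot>[x1,x3].\<close>
definition gamma_vertex :: "nat \<Rightarrow> int \<Rightarrow> 'k::field_char_0 vertex" where
  "gamma_vertex n m =
     (let k = m div 2 in
      if even m then act_by_inv (f_pow n (- k)) [coord 0]
      else act_by_inv (f_pow n (- k)) [coord 0, coord 2])"

text \<open>Points of the geometric realisation of \<C>^1 are represented by barycentric
coordinates (functions vertex \<Rightarrow> real).  \<gamma> is the arc-length parametrised
piecewise-linear path through consecutive vertices (each edge has length 1).\<close>
definition gamma :: "nat \<Rightarrow> real \<Rightarrow> ('k::field_char_0 vertex \<Rightarrow> real)" where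
  "gamma n t = (let m = \<lfloor>t\<rfloor>; s = t - of_int m in
     (\<lambda>v. (if v = gamma_vertex n m then 1 - s else 0)
        + (if v = gamma_vertex n (m + 1) then s else 0)))"

end

theory Submission
  imports Defs
begin

text \<open>
  Since \<gamma> runs through consecutive vertices along edges, it is injective as soon as its integer
  vertices are pairwise distinct. Vertices of different types differ, and an equality
  f^k.[x1] = f^l.[x1] or f^k.[x1,x3] = f^l.[x1,x3] with k < l would make the first component
  of f^(l-k) an affine function of x1 and x3 alone. This fails at the rational points (1,-1,1)
  and (1,-2,1): on the region x1 x2 x3 \<le> 0 the map g replaces the middle entry b by b - ac with
  |b - ac| = |b| + |a||c|, so g and the cyclic permutation h preserve a strict componentwise
  domination of absolute values, and g makes it strict in the first coordinate.
\<close>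

definition polygonal_path :: "(int \<Rightarrow> 'v) \<Rightarrow> real \<Rightarrow> 'v \<Rightarrow> real" where
  "polygonal_path V t = (\<lambda>v. (if v = V \<lfloor>t\<rfloor> then 1 - frac t else 0)
                            + (if v = V (\<lfloor>t\<rfloor> + 1) then frac t else 0))"

lemma inj_polygonal_path:
  assumes "inj V"
  shows "inj (polygonal_path V)"
proof (rule injI)
  have at_floor: "polygonal_path V t (V \<lfloor>t\<rfloor>) = 1 - frac t" for t
    using assms by (simp add: polygonal_path_def inj_eq)
  have at_succ: "polygonal_path V t (V (\<lfloor>t\<rfloor> + 1)) = frac t" for t
    using assms by (simp add: polygonal_path_def inj_eq)
  have support: "m = \<lfloor>t\<rfloor> \<or> m = \<lfloor>t\<rfloor> + 1" if "polygonal_path V t (V m) \<noteq> 0" for m t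
    using that assms by (auto simp: polygonal_path_def inj_eq split: if_splits)
  have floor_in: "\<lfloor>t\<rfloor> = \<lfloor>t'\<rfloor> \<or> \<lfloor>t\<rfloor> = \<lfloor>t'\<rfloor> + 1"
    if "polygonal_path V t = polygonal_path V t'" for t t'
    using support[of t' "\<lfloor>t\<rfloor>"] at_floor[of t] frac_lt_1[of t] that by auto
  fix t t' :: real
  assume eq: "polygonal_path V t = polygonal_path V t'"
  have "\<lfloor>t\<rfloor> = \<lfloor>t'\<rfloor>" using floor_in[OF eq] floor_in[OF eq [symmetric]] by linarith
  moreover from this have "frac t = frac t'" using at_succ eq by metis
  ultimately show "t = t'" by (simp add: frac_def)
qed

lemma orbit_self: "fs \<in> orbit (fs :: ('k::field_char_0 pt \<Rightarrow> 'k) list)"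
proof -
  let ?I = "\<lambda>i j. if i = j then (1::'k) else 0"
  have delta: "(\<Sum>l<length fs. ?I i l * f l) = f i" if "i < length fs" for i and f :: "nat \<Rightarrow> 'k"
  proof -
    have "(\<Sum>l<length fs. ?I i l * f l) = (\<Sum>l<length fs. if l = i then f l else 0)"
      by (rule sum.cong) auto
    with that show ?thesis by simp
  qed
  have "invertible_mat (length fs) ?I"
    unfolding invertible_mat_def by (auto intro!: exI[of _ ?I] simp: delta)
  moreover have "fs = map (\<lambda>i x. (\<Sum>j<length fs. ?I i j * (fs ! j) x) + 0) [0..<length fs]"
    by (rule nth_equalityI) (auto simp: delta)
  ultimately show ?thesis
    unfolding orbit_def by (intro CollectI exI[of _ ?I] exI[of _ "\<lambda>_. 0"]) simp
qed

lemma length_mem_orbit: "gs \<in> orbit fs \<Longrightarrow> length gs = length fs"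
  by (auto simp: orbit_def)

lemma hd_mem_orbit:
  assumes "hs \<in> orbit fs" "fs \<noteq> []"
  shows "\<exists>a c. \<forall>x. hd hs x = (\<Sum>j<length fs. a j * (fs ! j) x) + c"
proof -
  obtain A c where "hs = map (\<lambda>i x. (\<Sum>j<length fs. A i j * (fs ! j) x) + c i) [0..<length fs]"
    using assms(1) by (auto simp: orbit_def)
  then have "hd hs x = (\<Sum>j<length fs. A 0 j * (fs ! j) x) + c 0" for x
    using assms(2) by (simp add: hd_map upt_conv_Cons)
  then show ?thesis by blast
qed

lemma abs_diff_mult_eq:
  fixes a b c :: "'a::linordered_idom"
  assumes "a * b * c \<le> 0"
  shows "\<bar>b - a * c\<bar> = \<bar>b\<bar> + \<bar>a\<bar> * \<bar>c\<bar>"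
proof -
  have "\<bar>x - y\<bar> = \<bar>x\<bar> + \<bar>y\<bar>" if "x * y \<le> 0" for x y :: 'a
    using that by (auto simp: abs_if mult_le_0_iff)
  from this[of b "a * c"] assms show ?thesis by (simp add: abs_mult algebra_simps)
qed

lemma g_map_sign:
  fixes a b c :: "'a::linordered_idom"
  assumes "a * b * c \<le> 0"
  shows "(b - a * c) * a * c \<le> 0"
proof -
  have "(b - a * c) * a * c = a * b * c - (a * c)\<^sup>2"
    by (simp add: algebra_simps power2_eq_square)
  then show ?thesis using assms zero_le_power2[of "a * c"] by linarith
qed

definition dominated :: "'a::linordered_field pt \<Rightarrow> 'a pt \<Rightarrow> bool" where
  "dominated = (\<lambda>(a, b, c) (a', b', c'). a * b * c \<le> 0 \<and> a' * b' * c' \<le> 0 \<and>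
     1 \<le> \<bar>a\<bar> \<and> 1 \<le> \<bar>b\<bar> \<and> 1 \<le> \<bar>c\<bar> \<and> \<bar>a\<bar> \<le> \<bar>a'\<bar> \<and> \<bar>b\<bar> \<le> \<bar>b'\<bar> \<and> \<bar>c\<bar> \<le> \<bar>c'\<bar> \<and>
     (\<bar>a\<bar> < \<bar>a'\<bar> \<or> \<bar>b\<bar> < \<bar>b'\<bar> \<or> \<bar>c\<bar> < \<bar>c'\<bar>))"

lemma abs_fst_g_map_less:
  assumes "dominated p q"
  shows "\<bar>fst (g_map p)\<bar> < \<bar>fst (g_map q)\<bar>"
proof -
  obtain a b c a' b' c' where pq: "p = (a, b, c)" "q = (a', b', c')"
    by (cases p, cases q) auto
  from assms have le: "\<bar>a\<bar> \<le> \<bar>a'\<bar>" "\<bar>b\<bar> \<le> \<bar>b'\<bar>" "\<bar>c\<bar> \<le> \<bar>c'\<bar>"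
    and one: "1 \<le> \<bar>a\<bar>" "1 \<le> \<bar>c\<bar>"
    and strict: "\<bar>a\<bar> < \<bar>a'\<bar> \<or> \<bar>b\<bar> < \<bar>b'\<bar> \<or> \<bar>c\<bar> < \<bar>c'\<bar>"
    by (auto simp: dominated_def pq)
  have "\<bar>a\<bar> * \<bar>c\<bar> \<le> \<bar>a'\<bar> * \<bar>c'\<bar>" using le one by (intro mult_mono) auto
  moreover have "\<bar>a\<bar> * \<bar>c\<bar> < \<bar>a'\<bar> * \<bar>c'\<bar>" if "\<bar>a\<bar> < \<bar>a'\<bar> \<or> \<bar>c\<bar> < \<bar>c'\<bar>"
    using that le one by (auto intro: mult_less_le_imp_less mult_le_less_imp_less)
  ultimately have "\<bar>b\<bar> + \<bar>a\<bar> * \<bar>c\<bar> < \<bar>b'\<bar> + \<bar>a'\<bar> * \<bar>c'\<bar>"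
    using le strict by (auto intro: add_le_less_mono add_less_le_mono)
  then show ?thesis
    using assms by (simp add: dominated_def pq g_map_def abs_diff_mult_eq)
qed

lemma dominated_g_map:
  assumes "dominated p q"
  shows "dominated (g_map p) (g_map q)"
proof -
  obtain a b c a' b' c' where pq: "p = (a, b, c)" "q = (a', b', c')"
    by (cases p, cases q) auto
  from assms have sign: "a * b * c \<le> 0" and one: "1 \<le> \<bar>a\<bar>" "1 \<le> \<bar>c\<bar>"
    by (auto simp: dominated_def pq)
  have "1 * 1 \<le> \<bar>a\<bar> * \<bar>c\<bar>" using one by (intro mult_mono) auto
  then have "1 \<le> \<bar>b - a * c\<bar>" using abs_diff_mult_eq[OF sign] by simp
  then show ?thesis
    using assms abs_fst_g_map_less[OF assms]
    by (auto simp: dominated_def pq g_map_def g_map_sign)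
qed

lemma dominated_h_map:
  assumes "dominated p q"
  shows "dominated (h_map p) (h_map q)"
  using assms by (cases p, cases q) (auto simp: dominated_def h_map_def algebra_simps)

lemma dominated_g_map_funpow:
  "dominated p q \<Longrightarrow> dominated ((g_map ^^ m) p) ((g_map ^^ m) q)"
  by (induction m) (simp_all add: dominated_g_map)

lemma dominated_f_map_funpow:
  "dominated p q \<Longrightarrow> dominated ((f_map n ^^ d) p) ((f_map n ^^ d) q)"
  by (induction d) (simp_all add: f_map_def dominated_g_map_funpow dominated_h_map)

lemma fst_f_map_funpow_neq:
  assumes "dominated p q" "n \<ge> 1" "d \<ge> 1"
  shows "fst ((f_map n ^^ d) p) \<noteq> fst ((f_map n ^^ d) q)"
proof -
  obtain d' where d: "d = Suc d'" using assms(3) by (cases d) auto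
  obtain m where n: "n = Suc m" using assms(2) by (cases n) auto
  have "f_map n ^^ d = g_map \<circ> (g_map ^^ m) \<circ> h_map \<circ> (f_map n ^^ d')"
    by (simp add: d n f_map_def comp_assoc)
  moreover have "dominated ((g_map ^^ m) (h_map ((f_map n ^^ d') p)))
                           ((g_map ^^ m) (h_map ((f_map n ^^ d') q)))"
    by (intro dominated_g_map_funpow dominated_h_map dominated_f_map_funpow assms(1))
  ultimately show ?thesis by (metis abs_fst_g_map_less comp_apply less_irrefl)
qed

definition of_rat_pt :: "rat pt \<Rightarrow> 'k::field_char_0 pt" where
  "of_rat_pt = map_prod of_rat (map_prod of_rat of_rat)"

lemma f_map_funpow_of_rat_pt:
  "(f_map n ^^ d) (of_rat_pt p) = (of_rat_pt ((f_map n ^^ d) p) :: 'k::field_char_0 pt)"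
proof -
  have g: "g_map (of_rat_pt p) = (of_rat_pt (g_map p) :: 'k pt)" for p
    by (cases p) (simp add: g_map_def of_rat_pt_def of_rat_diff of_rat_mult)
  have h: "h_map (of_rat_pt p) = (of_rat_pt (h_map p) :: 'k pt)" for p
    by (cases p) (simp add: h_map_def of_rat_pt_def)
  have "(g_map ^^ m) (of_rat_pt p) = (of_rat_pt ((g_map ^^ m) p) :: 'k pt)" for m p
    by (induction m) (simp_all add: g)
  then have "f_map n (of_rat_pt p) = (of_rat_pt (f_map n p) :: 'k pt)" for p
    by (simp add: f_map_def h)
  then show ?thesis by (induction d) simp_all
qed

lemma coord0_f_map_funpow_not_affine:
  fixes \<alpha> \<beta> \<gamma> :: "'k::field_char_0"
  assumes "n \<ge> 1" "d \<ge> 1"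
  shows "\<not> (\<forall>y. coord 0 ((f_map n ^^ d) y) = \<alpha> * coord 0 y + \<beta> * coord 2 y + \<gamma>)"
proof
  assume affine: "\<forall>y. coord 0 ((f_map n ^^ d) y) = \<alpha> * coord 0 y + \<beta> * coord 2 y + \<gamma>"
  let ?p = "(1, -1, 1) :: rat pt" and ?q = "(1, -2, 1) :: rat pt"
  have coord_of_rat_pt: "coord i (of_rat_pt r :: 'k pt) = of_rat (coord i r)" for i r
    by (cases r) (simp add: coord_def of_rat_pt_def)
  have coord_0_eq_fst: "coord 0 r = fst r" for r :: "rat pt"
    by (cases r) (simp add: coord_def)
  have dom: "dominated ?p ?q" by (simp add: dominated_def)
  have "coord 0 ((f_map n ^^ d) (of_rat_pt ?p) :: 'k pt) \<noteq> coord 0 ((f_map n ^^ d) (of_rat_pt ?q))"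
    using fst_f_map_funpow_neq[OF dom assms]
    by (simp add: f_map_funpow_of_rat_pt coord_of_rat_pt coord_0_eq_fst)
  moreover have "coord i (of_rat_pt ?p :: 'k pt) = coord i (of_rat_pt ?q)" if "i \<noteq> 1" for i
    using that unfolding coord_of_rat_pt by (simp add: coord_def)
  ultimately show False using affine by simp
qed

lemma funpow_inverse:
  fixes f g :: "'a \<Rightarrow> 'a"
  assumes "\<And>x. f (g x) = x"
  shows "(f ^^ n) ((g ^^ n) x) = x"
proof (induction n arbitrary: x)
  case (Suc n)
  have "(f ^^ Suc n) ((g ^^ Suc n) x) = (f ^^ n) (f (g ((g ^^ n) x)))"
    by (simp add: funpow_swap1)
  then show ?case by (simp only: assms Suc.IH)
qed simp

lemma f_map_f_inv: "f_map n (f_inv n x) = x"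
proof -
  have g: "g_map (g_inv y) = y" and h: "h_map (h_inv y) = y" for y :: "'k::field_char_0 pt"
    by (cases y; simp add: g_map_def g_inv_def h_map_def h_inv_def)+
  show ?thesis by (simp add: f_map_def f_inv_def h funpow_inverse[of g_map g_inv, OF g])
qed

lemma f_inv_f_map: "f_inv n (f_map n x) = x"
proof -
  have g: "g_inv (g_map y) = y" and h: "h_inv (h_map y) = y" for y :: "'k::field_char_0 pt"
    by (cases y; simp add: g_map_def g_inv_def h_map_def h_inv_def)+
  show ?thesis by (simp add: f_map_def f_inv_def h funpow_inverse[of g_inv g_map, OF g])
qed

lemma f_pow_succ: "f_pow n (a + 1) x = f_map n (f_pow n a x)"
proof (cases "a \<ge> 0")
  case True
  then have "nat (a + 1) = Suc (nat a)" by simp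
  with True show ?thesis by (simp add: f_pow_def)
next
  case False
  then have "nat (- a) = Suc (nat (- (a + 1)))" by simp
  with False show ?thesis by (simp add: f_pow_def f_map_f_inv)
qed

lemma f_pow_pred: "f_pow n (a - 1) x = f_inv n (f_pow n a x)"
  using f_pow_succ[of n "a - 1" x] by (simp add: f_inv_f_map)

lemma f_pow_add: "f_pow n (a + b) x = f_pow n b (f_pow n a x)"
proof (induction b arbitrary: x rule: int_induct[where k = 0])
  case base
  then show ?case by (simp add: f_pow_def)
next
  case (step1 b)
  then show ?case by (metis add.assoc f_pow_succ)
next
  case (step2 b)
  then show ?case by (metis add_diff_eq f_pow_pred)
qed

lemma coord0_f_pow_not_affine:
  fixes \<alpha> \<beta> \<gamma> :: "'k::field_char_0"
  assumes "n \<ge> 1" "k < l"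
  shows "\<not> (\<forall>x. coord 0 (f_pow n (- k) x)
              = \<alpha> * coord 0 (f_pow n (- l) x) + \<beta> * coord 2 (f_pow n (- l) x) + \<gamma>)"
proof
  assume affine: "\<forall>x. coord 0 (f_pow n (- k) x)
                   = \<alpha> * coord 0 (f_pow n (- l) x) + \<beta> * coord 2 (f_pow n (- l) x) + \<gamma>"
  have "f_pow n (- k) (f_pow n l y) = (f_map n ^^ nat (l - k)) y" for y :: "'k pt"
    using f_pow_add[of n l "- k" y, symmetric] assms(2) by (simp add: f_pow_def)
  moreover have "f_pow n (- l) (f_pow n l y) = y" for y :: "'k pt"
    using f_pow_add[of n l "- l" y, symmetric] by (simp add: f_pow_def)
  ultimately have "\<forall>y. coord 0 ((f_map n ^^ nat (l - k)) y) = \<alpha> * coord 0 y + \<beta> * coord 2 y + \<gamma>"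
    using affine by metis
  moreover have "nat (l - k) \<ge> 1" using assms(2) by simp
  ultimately show False using coord0_f_map_funpow_not_affine[OF assms(1)] by blast
qed

definition gamma_tuple :: "nat \<Rightarrow> int \<Rightarrow> ('k::field_char_0 pt \<Rightarrow> 'k) list" where
  "gamma_tuple n m = map (\<lambda>p. p \<circ> f_pow n (- (m div 2)))
     (if even m then [coord 0] else [coord 0, coord 2])"

lemma gamma_vertex_eq_orbit: "gamma_vertex n m = orbit (gamma_tuple n m)"
  by (simp add: gamma_vertex_def gamma_tuple_def act_by_inv_def Let_def)

lemma gamma_vertex_eq_imp_affine:
  assumes "gamma_vertex n m = (gamma_vertex n m' :: 'k::field_char_0 vertex)"
  shows "\<exists>\<alpha> \<beta> \<gamma>. \<forall>x. coord 0 (f_pow n (- (m div 2)) x :: 'k pt)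
     = \<alpha> * coord 0 (f_pow n (- (m' div 2)) x) + \<beta> * coord 2 (f_pow n (- (m' div 2)) x) + \<gamma>"
proof -
  let ?F = "f_pow n (- (m' div 2)) :: 'k pt \<Rightarrow> 'k pt"
  let ?fs = "gamma_tuple n m' :: ('k pt \<Rightarrow> 'k) list"
  have "gamma_tuple n m \<in> orbit ?fs"
    using orbit_self assms by (metis gamma_vertex_eq_orbit)
  moreover have "?fs \<noteq> []" by (simp add: gamma_tuple_def)
  ultimately obtain a c
    where hd_affine: "\<forall>x. hd (gamma_tuple n m) x = (\<Sum>j<length ?fs. a j * (?fs ! j) x) + c"
    by (blast dest: hd_mem_orbit)
  have "coord 0 (f_pow n (- (m div 2)) x)
      = a 0 * coord 0 (?F x) + (if even m' then 0 else a 1) * coord 2 (?F x) + c" for x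
  proof -
    have "hd (gamma_tuple n m) x = coord 0 (f_pow n (- (m div 2)) x)"
      by (simp add: gamma_tuple_def)
    moreover have "(\<Sum>j<length ?fs. a j * (?fs ! j) x)
        = a 0 * coord 0 (?F x) + (if even m' then 0 else a 1) * coord 2 (?F x)"
      by (simp add: gamma_tuple_def numeral_2_eq_2)
    ultimately show ?thesis using hd_affine by simp
  qed
  then show ?thesis by blast
qed

lemma gamma_vertex_inj:
  assumes "n \<ge> 1"
  shows "inj (gamma_vertex n :: int \<Rightarrow> 'k::field_char_0 vertex)"
proof (rule injI)
  fix m m' :: int
  assume eq: "(gamma_vertex n m :: 'k vertex) = gamma_vertex n m'"
  have "gamma_tuple n m \<in> orbit (gamma_tuple n m' :: ('k pt \<Rightarrow> 'k) list)"
    using orbit_self eq by (metis gamma_vertex_eq_orbit)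
  then have parity: "even m \<longleftrightarrow> even m'"
    by (auto dest!: length_mem_orbit simp: gamma_tuple_def split: if_splits)
  have "m div 2 = m' div 2"
  proof (rule linorder_cases)
    assume "m div 2 < m' div 2"
    then show ?thesis
      using gamma_vertex_eq_imp_affine[OF eq] coord0_f_pow_not_affine[OF assms] by blast
  next
    assume "m' div 2 < m div 2"
    then show ?thesis
      using gamma_vertex_eq_imp_affine[OF eq [symmetric]] coord0_f_pow_not_affine[OF assms] by blast
  qed
  with parity show "m = m'" by presburger
qed

lemma gamma_eq_polygonal_path: "gamma n = polygonal_path (gamma_vertex n)"
  by (simp add: fun_eq_iff gamma_def polygonal_path_def frac_def Let_def)

theorem corollary7p5:
  fixes n :: nat
  assumes "n \<ge> 3"
  shows "inj (gamma n :: real \<Rightarrow> ('k::field_char_0 vertex \<Rightarrow> real))"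
  unfolding gamma_eq_polygonal_path
  using assms by (intro inj_polygonal_path gamma_vertex_inj) simp

end
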